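(* Assume $q\equiv1\pmod 4$. Then $S^{(2)}(\beta)=0$ if and only if \[ \begin{cases} 2K(\chi)-(1-\zeta_4)K(\eta_{1/4}\chi)-(1+\zeta_4)K(\eta_{3/4}\chi)\equiv0 \pmod{8\mathcal{P}\,\mathbb{Z}[\zeta_{4k}]} & \text{if } q\equiv1\pmod 8,\\ 4+2K(\chi)+(1-\zeta_4)K(\eta_{1/4}\chi)+(1+\zeta_4)K(\eta_{3/4}\chi)\equiv0 \pmod{8\mathcal{P}\,\mathbb{Z}[\zeta_{4k}]} & \text{if } q\equiv5\pmod 8. \end{cases} \]
   Context: Let $p$ be an odd prime, $m\ge1$, $q=p^m$, $\alpha$ a primitive element of $\mathbb{F}_q$, and $T=q-1$. The binary SLCE sequence $(s_n)_{n\ge0}$ is defined as follows: $s_n=1$ if $\alpha^n+1$ is a nonzero non-square of $\mathbb{F}_q$, and $s_n=0$ otherwise. Put $S(X)=\sum_{n=0}^{T-1}s_nX^n\in\mathbb{F}_2[X]$. For an integer $t\ge0$, the $t$-th Hasse derivative is $S^{(t)}(X)=\sum_{n=t}^{T-1}\binom{n}{t}s_nX^{n-t}$, with coefficients reduced mod $2$. Let $\beta$ be an element of an algebraic closure of $\mathbb{F}_2$ with $\beta^T=1$ and multiplicative order $k>1$ (so $k$ is odd). Let $f$ be the order of $2$ modulo $k$, and write $\zeta_N=e^{2\pi i/N}$. Let $\mathcal{P}$ be a prime ideal of $\mathbb{Z}[\zeta_k]$ containing $2$. Fix a field isomorphism $\phi:\mathbb{F}_2(\beta)=\mathbb{F}_{2^f}\to\mathbb{Z}[\zeta_k]/\mathcal{P}$,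 and let $\zeta$ be the unique complex $k$-th root of unity with $\phi(\beta)=\zeta+\mathcal{P}$. Multiplicative characters of $\mathbb{F}_q$ are homomorphisms $\mathbb{F}_q^*\to\mathbb{C}^*$, extended by value $0$ at $0$. For a rational $j$ with $(q-1)j\in\mathbb{Z}$, $\eta_j$ is the character with $\eta_j(\alpha)=e^{2\pi ij}$. Let $\rho=\eta_{1/2}$ be the quadratic character. Let $\chi$ be the character with $\chi(\alpha^n)=\zeta^n$. For a character $\psi$, set $K(\psi)=\sum_{x\in\mathbb{F}_q}\rho(x)\psi(1-x)$. For an ideal $I$ of $\mathbb{Z}[\zeta_k]$, $I\,\mathbb{Z}[\zeta_{4k}]$ is the ideal it generates in $\mathbb{Z}[\zeta_{4k}]$. *)

theory Defs
  imports Complex_Main "HOL-Computational_Algebra.Polynomial" "HOL-Algebra.QuotRing"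
begin

definition zeta :: "nat \<Rightarrow> complex" where
  "zeta N = exp (2 * pi * \<i> / of_nat N)"

definition Zzeta :: "nat \<Rightarrow> complex set" where
  "Zzeta N = {x. \<exists>g :: int poly. x = poly (map_poly of_int g) (zeta N)}"

definition Zzeta_ring :: "nat \<Rightarrow> complex ring" where
  "Zzeta_ring N = \<lparr>carrier = Zzeta N, monoid.mult = (*), one = 1, zero = 0, add = (+)\<rparr>"

definition ideal_ext :: "complex set \<Rightarrow> complex set \<Rightarrow> complex set" where
  "ideal_ext R I = {x. \<exists>(n::nat) a r. (\<forall>i<n. a i \<in> I \<and> r i \<in> R) \<and> x = (\<Sum>i<n. a i * r i)}"

(* F_2(beta): the subring of a characteristic 2 field generated by beta;
   it is a field since beta is algebraic *)
definition F2_adj :: "'b::field \<Rightarrow> 'b set" where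
  "F2_adj \<beta> = {x. \<exists>g :: int poly. x = poly (map_poly of_int g) \<beta>}"

definition F2_adj_ring :: "'b::field \<Rightarrow> 'b ring" where
  "F2_adj_ring \<beta> = \<lparr>carrier = F2_adj \<beta>, monoid.mult = (*), one = 1, zero = 0, add = (+)\<rparr>"

definition mult_order :: "'b::field \<Rightarrow> nat" where
  "mult_order x = (LEAST d. d > 0 \<and> x ^ d = 1)"

definition primitive_elem :: "'a::{finite,field} \<Rightarrow> bool" where
  "primitive_elem \<alpha> \<longleftrightarrow> (\<forall>x. x \<noteq> 0 \<longrightarrow> (\<exists>n::nat. x = \<alpha> ^ n))"

definition dlog :: "'a::{finite,field} \<Rightarrow> 'a \<Rightarrow> nat" where
  "dlog \<alpha> x = (LEAST n. \<alpha> ^ n = x)"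

definition slce :: "'a::{finite,field} \<Rightarrow> nat \<Rightarrow> nat" where
  "slce \<alpha> n = (if \<alpha> ^ n + 1 \<noteq> 0 \<and> \<not> (\<exists>y. y ^ 2 = \<alpha> ^ n + 1) then 1 else 0)"

definition slce_poly :: "'a::{finite,field} \<Rightarrow> 'b::comm_ring_1 poly" where
  "slce_poly \<alpha> = (\<Sum>n<card (UNIV :: 'a set) - 1. monom (of_nat (slce \<alpha> n)) n)"

definition hasse_deriv :: "nat \<Rightarrow> 'b::comm_ring_1 poly \<Rightarrow> 'b poly" where
  "hasse_deriv t p = (\<Sum>n\<in>{t..degree p}. monom (of_nat (n choose t) * coeff p n) (n - t))"

definition eta :: "'a::{finite,field} \<Rightarrow> real \<Rightarrow> 'a \<Rightarrow> complex" where
  "eta \<alpha> j x = (if x = 0 then 0 else exp (2 * pi * \<i> * of_real j * of_nat (dlog \<alpha> x)))"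

definition chi :: "'a::{finite,field} \<Rightarrow> complex \<Rightarrow> 'a \<Rightarrow> complex" where
  "chi \<alpha> z x = (if x = 0 then 0 else z ^ dlog \<alpha> x)"

definition Ksum :: "'a::{finite,field} \<Rightarrow> ('a \<Rightarrow> complex) \<Rightarrow> complex" where
  "Ksum \<alpha> \<psi> = (\<Sum>x\<in>UNIV. eta \<alpha> (1/2) x * \<psi> (1 - x))"

end

theory Submission
  imports Defs "HOL-Analysis.Complex_Transcendental"
begin

text \<open>
  In characteristic 2 the binomial coefficient \<open>n choose 2\<close> is odd exactly when \<open>n mod 4 \<in> {2,3}\<close>,
  so \<open>\<beta>\<^sup>2 S\<^sup>(\<^sup>2\<^sup>)(\<beta>)\<close> is the sum of \<open>\<beta>\<^sup>n\<close> over the \<open>n < q - 1\<close> in these residue classes with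
  \<open>s\<^sub>n = 1\<close>. The isomorphism \<open>\<phi>\<close> turns its vanishing into \<open>A \<in> P\<close>, where \<open>A\<close> is the same sum of
  powers of \<open>\<zeta>\<close>.

  If \<open>\<psi>(\<alpha>\<^sup>n) = w\<^sup>n\<close>, the substitution \<open>x = 1 + \<alpha>\<^sup>n\<close> expresses \<open>K(\<psi>)\<close> through \<open>S(w)\<close>, since
  \<open>\<rho>(1 + \<alpha>\<^sup>n) = 1 - 2 s\<^sub>n\<close> except at \<open>\<alpha>\<^sup>n = -1\<close>. For \<open>w = \<zeta>, i\<zeta>, -i\<zeta>\<close> the weights
  \<open>2, -(1 - i), -(1 + i)\<close> select the exponents \<open>n \<equiv> 2, 3 (mod 4)\<close>, and the expression of the
  theorem becomes \<open>-8A\<close>.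

  Finally \<open>8A\<close> lies in the extension of \<open>8P\<close> to \<open>\<int>[\<zeta>\<^sub>4\<^sub>k]\<close> iff \<open>A \<in> P\<close>: for odd \<open>k\<close> we have
  \<open>\<int>[\<zeta>\<^sub>4\<^sub>k] = \<int>[\<zeta>\<^sub>k] + i \<int>[\<zeta>\<^sub>k]\<close>, so \<open>A = x + i y\<close> with \<open>x, y \<in> P\<close>, whence
  \<open>(A - x)\<^sup>2 = -y\<^sup>2 \<in> P\<close> and \<open>A \<in> P\<close> because \<open>P\<close> is prime.
\<close>

lemma power_eq_power_mod:
  fixes a :: "'a::monoid_mult"
  assumes "a ^ T = 1"
  shows "a ^ n = a ^ (n mod T)"
proof -
  have "a ^ n = a ^ (T * (n div T) + n mod T)" by simp
  also have "\<dots> = (a ^ T) ^ (n div T) * a ^ (n mod T)" by (simp only: power_add power_mult)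
  finally show ?thesis by (simp add: assms)
qed

lemma finite_field_power_card_minus_1:
  fixes x :: "'a::{finite,field}"
  assumes "x \<noteq> 0"
  shows "x ^ (CARD('a) - 1) = 1"
proof -
  let ?U = "UNIV - {0::'a}"
  have bij: "bij_betw (\<lambda>y. x * y) ?U ?U"
    by (rule bij_betwI[where g = "\<lambda>y. inverse x * y"]) (use assms in auto)
  have "prod (\<lambda>y. y) ?U = prod (\<lambda>y. x * y) ?U"
    using prod.reindex_bij_betw[OF bij, of "\<lambda>y. y"] by simp
  also have "\<dots> = x ^ card ?U * prod (\<lambda>y. y) ?U" by (simp add: prod.distrib)
  finally have "x ^ card ?U * prod (\<lambda>y. y) ?U = 1 * prod (\<lambda>y. y) ?U" by simp
  moreover have "prod (\<lambda>y. y) ?U \<noteq> 0" by (simp add: prod_zero_iff)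
  ultimately show ?thesis by (simp add: card_Diff_singleton)
qed

lemma of_nat_CHAR_2:
  assumes "CHAR('a::semiring_1) = 2"
  shows "(of_nat m :: 'a) = (if even m then 0 else 1)"
proof -
  have "(of_nat 2 :: 'a) = 0" using of_nat_CHAR[where 'a='a] assms by simp
  then have "(of_nat m :: 'a) = of_nat (m mod 2)"
    by (metis add_0 div_mult_mod_eq mult_zero_right of_nat_add of_nat_mult)
  then show ?thesis by (simp add: even_iff_mod_2_eq_zero odd_iff_mod_2_eq_one)
qed

lemma odd_choose_2_iff: "odd (n choose 2) \<longleftrightarrow> n mod 4 \<in> {2, 3}"
proof (induction n)
  case 0
  then show ?case by (simp add: binomial_eq_0)
next
  case (Suc n)
  have step: "(odd r \<noteq> (r \<in> {2, 3})) \<longleftrightarrow> Suc r mod 4 \<in> {2, 3}" if r4: "r < 4" for r :: nat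
  proof -
    consider "r = 0" | "r = 1" | "r = 2" | "r = 3" using r4 by linarith
    then show ?thesis by cases simp_all
  qed
  have "Suc n choose 2 = n + (n choose 2)"
    using binomial_Suc_Suc[of n 1] by (simp add: numeral_2_eq_2)
  then have "odd (Suc n choose 2) \<longleftrightarrow> odd (n mod 4) \<noteq> (n mod 4 \<in> {2, 3})"
    using Suc.IH by (auto simp: even_mod_4_div_2 dvd_mod_iff)
  also have "\<dots> \<longleftrightarrow> Suc n mod 4 \<in> {2, 3}"
    using step[of "n mod 4"] by (simp add: mod_Suc_eq)
  finally show ?case .
qed

lemma exp_two_pi_i_quarter: "exp (2 * pi * \<i> * complex_of_real (1/4)) = \<i>"
proof -
  have "2 * pi * \<i> * complex_of_real (1/4) = \<i> * complex_of_real (pi / 2)" by simp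
  then have "exp (2 * pi * \<i> * complex_of_real (1/4)) = cis (pi / 2)" by (simp only: cis_conv_exp)
  then show ?thesis by simp
qed

lemma exp_two_pi_i_half: "exp (2 * pi * \<i> * complex_of_real (1/2)) = -1"
proof -
  have "2 * pi * \<i> * complex_of_real (1/2) = \<i> * complex_of_real pi" by simp
  then show ?thesis by (simp add: cis_conv_exp[symmetric])
qed

lemma exp_two_pi_i_three_quarters: "exp (2 * pi * \<i> * complex_of_real (3/4)) = - \<i>"
proof -
  have "2 * pi * \<i> * complex_of_real (3/4) = of_nat 3 * (2 * pi * \<i> * complex_of_real (1/4))"
    by simp
  then have "exp (2 * pi * \<i> * complex_of_real (3/4)) = \<i> ^ 3"
    by (simp only: exp_of_nat_mult exp_two_pi_i_quarter)
  then show ?thesis by (simp add: power3_eq_cube)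
qed

lemma quarter_filter_weight:
  "2 - (1 - \<i>) * \<i> ^ n - (1 + \<i>) * (- \<i>) ^ n = (if n mod 4 \<in> {2, 3} then 4 else 0)"
proof -
  have residue: "2 - (1 - \<i>) * \<i> ^ r - (1 + \<i>) * (- \<i>) ^ r = (if r \<in> {2, 3} then 4 else 0)"
    if r4: "r < 4" for r :: nat
  proof -
    consider "r = 0" | "r = 1" | "r = 2" | "r = 3" using r4 by linarith
    then show ?thesis
    proof cases
      case 1 then show ?thesis by simp
    next
      case 2 then show ?thesis by (simp add: algebra_simps)
    next
      case 3 then show ?thesis by simp
    next
      case 4 then show ?thesis by (simp add: power3_eq_cube algebra_simps)
    qed
  qed
  have "\<i> ^ 4 = 1" "(- \<i>) ^ 4 = 1" by (simp_all add: numeral_eq_Suc)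
  note reduce = power_eq_power_mod[OF this(1), of n] power_eq_power_mod[OF this(2), of n]
  show ?thesis unfolding reduce by (rule residue) simp
qed

lemma i_times_odd_root_neq_1:
  fixes z :: complex
  assumes "z ^ k = 1" "odd k"
  shows "\<i> * z \<noteq> 1" "- \<i> * z \<noteq> 1"
proof -
  obtain t where t: "k = 2 * t + 1" using assms(2) oddE by blast
  have s: "(-1::complex) ^ t = 1 \<or> (-1::complex) ^ t = -1" by (cases "even t") auto
  have p1: "\<i> ^ k = \<i> * (-1) ^ t" unfolding t by (simp add: power_mult power_add)
  have p2: "(- \<i>) ^ k = - \<i> * (-1) ^ t" unfolding t by (simp add: power_mult power_add)
  show "\<i> * z \<noteq> 1"
  proof
    assume h: "\<i> * z = 1"
    have "z = - \<i> * (\<i> * z)" by simp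
    then have "(- \<i>) ^ k = 1" unfolding h using assms(1) by simp
    then show False using p2 s by (auto simp: complex_eq_iff)
  qed
  show "- \<i> * z \<noteq> 1"
  proof
    assume h: "- \<i> * z = 1"
    have "z = \<i> * (- \<i> * z)" by simp
    then have "\<i> ^ k = 1" unfolding h using assms(1) by simp
    then show False using p1 s by (auto simp: complex_eq_iff)
  qed
qed

definition int_poly_range :: "'a::comm_ring_1 \<Rightarrow> 'a set" where
  "int_poly_range z = {x. \<exists>g :: int poly. x = poly (map_poly of_int g) z}"

lemma Zzeta_eq_int_poly_range: "Zzeta N = int_poly_range (zeta N)"
  by (simp add: Zzeta_def int_poly_range_def)

lemma F2_adj_eq_int_poly_range: "F2_adj \<beta> = int_poly_range \<beta>"
  by (simp add: F2_adj_def int_poly_range_def)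

lemma map_poly_of_int_add: "map_poly of_int (g + h) = map_poly of_int g + map_poly of_int h"
  by (rule poly_eqI) (simp add: coeff_map_poly)

lemma map_poly_of_int_uminus: "map_poly of_int (- g) = - map_poly of_int g"
  by (rule poly_eqI) (simp add: coeff_map_poly)

lemma map_poly_of_int_mult:
  "(map_poly of_int (g * h) :: 'a::comm_ring_1 poly) = map_poly of_int g * map_poly of_int h"
  by (rule poly_eqI) (simp add: coeff_map_poly coeff_mult)

lemma int_poly_range_add:
  assumes "x \<in> int_poly_range z" "y \<in> int_poly_range z"
  shows "x + y \<in> int_poly_range z"
proof -
  obtain g h where "x = poly (map_poly of_int g) z" "y = poly (map_poly of_int h) z"
    using assms unfolding int_poly_range_def by blast
  then have "x + y = poly (map_poly of_int (g + h)) z" by (simp add: map_poly_of_int_add)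
  then show ?thesis unfolding int_poly_range_def by blast
qed

lemma int_poly_range_uminus:
  assumes "x \<in> int_poly_range z"
  shows "- x \<in> int_poly_range z"
proof -
  obtain g where "x = poly (map_poly of_int g) z"
    using assms unfolding int_poly_range_def by blast
  then have "- x = poly (map_poly of_int (- g)) z" by (simp add: map_poly_of_int_uminus)
  then show ?thesis unfolding int_poly_range_def by blast
qed

lemma int_poly_range_diff: "x \<in> int_poly_range z \<Longrightarrow> y \<in> int_poly_range z \<Longrightarrow> x - y \<in> int_poly_range z"
  using int_poly_range_add int_poly_range_uminus by (metis diff_conv_add_uminus)

lemma int_poly_range_mult:
  assumes "x \<in> int_poly_range z" "y \<in> int_poly_range z"
  shows "x * y \<in> int_poly_range z"
proof -
  obtain g h where "x = poly (map_poly of_int g) z" "y = poly (map_poly of_int h) z"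
    using assms unfolding int_poly_range_def by blast
  then have "x * y = poly (map_poly of_int (g * h)) z" by (simp add: map_poly_of_int_mult)
  then show ?thesis unfolding int_poly_range_def by blast
qed

lemma of_int_in_int_poly_range: "of_int a \<in> int_poly_range z"
  unfolding int_poly_range_def by (auto intro!: exI[of _ "[:a:]"] simp: map_poly_pCons)

lemma power_in_int_poly_range: "z ^ n \<in> int_poly_range z"
  unfolding int_poly_range_def by (auto intro!: exI[of _ "monom 1 n"] simp: map_poly_monom poly_monom)

lemma int_poly_range_power: "x \<in> int_poly_range z \<Longrightarrow> x ^ n \<in> int_poly_range z"
  using of_int_in_int_poly_range[of 1 z] by (induction n) (auto simp: int_poly_range_mult)

lemma int_poly_range_sum:
  "(\<And>i. i \<in> S \<Longrightarrow> f i \<in> int_poly_range z) \<Longrightarrow> sum f S \<in> int_poly_range z"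
  using of_int_in_int_poly_range[of 0 z]
  by (induction S rule: infinite_finite_induct) (auto simp: int_poly_range_add)

lemma zeta_power_eq: "zeta k ^ j = exp (2 * of_real pi * \<i> * of_nat j / of_nat k)"
proof -
  have "zeta k ^ j = exp (of_nat j * (2 * pi * \<i> / of_nat k))"
    unfolding zeta_def by (rule exp_of_nat_mult[symmetric])
  also have "of_nat j * (2 * pi * \<i> / of_nat k) = 2 * of_real pi * \<i> * of_nat j / (of_nat k :: complex)"
    by simp
  finally show ?thesis .
qed

lemma root_of_unity_in_Zzeta:
  assumes "z ^ k = 1" "k > 0"
  shows "z \<in> Zzeta k"
proof -
  obtain j where "z = exp (2 * of_real pi * \<i> * of_nat j / of_nat k)"
    using complex_roots_unity[of k] assms by auto
  then have "z = zeta k ^ j" by (simp only: zeta_power_eq)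
  then show ?thesis unfolding Zzeta_eq_int_poly_range by (simp add: power_in_int_poly_range)
qed

text \<open>For odd \<open>k\<close>, \<open>((k + 1) / 2)\<^sup>2 / k + k / 4 \<equiv> 1 / (4k)\<close> modulo 1.\<close>

lemma zeta_4k_eq:
  assumes "odd k"
  shows "zeta (4 * k) = zeta k ^ (((k + 1) div 2)^2) * \<i> ^ k"
proof -
  obtain t where t: "k = 2 * t + 1" using assms oddE by blast
  define a where "a = ((k + 1) div 2)^2"
  have a: "a = (t + 1)^2" unfolding a_def t by simp
  have kp: "k > 0" using t by simp
  have ar: "4 * a + k * k = 1 + (4 * k) * (t + 1)"
    unfolding a t by (simp add: algebra_simps power2_eq_square)
  have eqa: "2 * of_real pi * \<i> * of_nat (4 * a) / of_nat (4 * k)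
      = 2 * of_real pi * \<i> * of_nat a / (of_nat k :: complex)"
    using kp by (simp add: field_simps)
  have e1: "zeta k ^ a = exp (2 * of_real pi * \<i> * of_nat (4 * a) / of_nat (4 * k))"
    unfolding eqa by (rule zeta_power_eq)
  have "\<i> ^ k = exp (of_nat k * (2 * pi * \<i> * complex_of_real (1/4)))"
    by (simp only: exp_of_nat_mult exp_two_pi_i_quarter)
  also have "of_nat k * (2 * pi * \<i> * complex_of_real (1/4))
      = 2 * of_real pi * \<i> * of_nat (k * k) / of_nat (4 * k)"
    using kp by (simp add: field_simps)
  finally have e2: "\<i> ^ k = exp (2 * of_real pi * \<i> * of_nat (k * k) / of_nat (4 * k))" .
  have "2 * of_real pi * \<i> * of_nat (4 * a + k * k) / of_nat (4 * k)
      = 2 * of_real pi * \<i> * of_nat (4 * a) / of_nat (4 * k)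
        + 2 * of_real pi * \<i> * of_nat (k * k) / (of_nat (4 * k) :: complex)"
    by (simp only: of_nat_add distrib_left add_divide_distrib)
  then have "zeta k ^ a * \<i> ^ k = exp (2 * of_real pi * \<i> * of_nat (4 * a + k * k) / of_nat (4 * k))"
    by (simp only: exp_add e1 e2)
  also have "\<dots> = exp (2 * of_real pi * \<i> * of_nat 1 / of_nat (4 * k))"
  proof (subst complex_root_unity_eq)
    show "1 \<le> 4 * k" using kp by simp
    show "(4 * a + k * k) mod (4 * k) = 1 mod (4 * k)" unfolding ar mod_mult_self2 ..
  qed
  also have "\<dots> = zeta (4 * k)" unfolding zeta_def by simp
  finally show ?thesis unfolding a_def by simp
qed

lemma Zzeta_4k_decomp:
  assumes "odd k" and r: "r \<in> Zzeta (4 * k)"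
  shows "\<exists>u \<in> Zzeta k. \<exists>v \<in> Zzeta k. r = u + \<i> * v"
proof -
  obtain t where t: "k = 2 * t + 1" using assms(1) oddE by blast
  define c where "c = zeta k ^ (((k + 1) div 2)^2) * (-1) ^ t"
  have c: "c \<in> Zzeta k" unfolding c_def Zzeta_eq_int_poly_range
    by (intro int_poly_range_mult power_in_int_poly_range int_poly_range_power)
      (use of_int_in_int_poly_range[of "-1"] in simp)
  have "\<i> ^ k = \<i> * (-1) ^ t" unfolding t by (simp add: power_mult power_add)
  then have z: "zeta (4 * k) = \<i> * c" unfolding c_def zeta_4k_eq[OF assms(1)] by simp
  obtain g where g: "r = poly (map_poly of_int g) (zeta (4 * k))"
    using r unfolding Zzeta_def by blast
  have "\<exists>u \<in> Zzeta k. \<exists>v \<in> Zzeta k. poly (map_poly of_int g) (zeta (4 * k)) = u + \<i> * v"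
  proof (induction g)
    case 0
    show ?case using of_int_in_int_poly_range[of 0]
      by (auto simp: Zzeta_eq_int_poly_range intro!: bexI[of _ 0])
  next
    case (pCons a p)
    then obtain u v where uv: "u \<in> Zzeta k" "v \<in> Zzeta k"
      "poly (map_poly of_int p) (zeta (4 * k)) = u + \<i> * v" by blast
    have "poly (map_poly of_int (pCons a p)) (zeta (4 * k)) = of_int a + \<i> * c * (u + \<i> * v)"
      using uv(3) z by (simp add: map_poly_pCons)
    also have "\<dots> = (of_int a - c * v) + \<i> * (c * u)" by (simp add: algebra_simps)
    finally have "poly (map_poly of_int (pCons a p)) (zeta (4 * k)) = (of_int a - c * v) + \<i> * (c * u)" .
    moreover have "of_int a - c * v \<in> Zzeta k" "c * u \<in> Zzeta k"
      using uv c of_int_in_int_poly_range[of a]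
      by (auto simp: Zzeta_eq_int_poly_range intro: int_poly_range_diff int_poly_range_mult)
    ultimately show ?case by blast
  qed
  then show ?thesis using g by simp
qed

definition hasse2_support :: "'a::{finite,field} \<Rightarrow> nat set" where
  "hasse2_support \<alpha> = {n. n < CARD('a) - 1 \<and> n mod 4 \<in> {2, 3} \<and> slce \<alpha> n = 1}"

lemma slce_0_or_1: "slce \<alpha> n = 0 \<or> slce \<alpha> n = 1"
  by (simp add: slce_def)

lemma coeff_slce_poly:
  "coeff (slce_poly \<alpha> :: 'b::comm_ring_1 poly) n =
     (if n < CARD('a) - 1 then of_nat (slce (\<alpha> :: 'a::{finite,field}) n) else 0)"
  unfolding slce_poly_def by (simp add: coeff_sum coeff_monom)

lemma poly_slce_poly:
  "poly (slce_poly (\<alpha> :: 'a::{finite,field})) w = (\<Sum>n < CARD('a) - 1. of_nat (slce \<alpha> n) * w ^ n)"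
  unfolding slce_poly_def by (simp add: poly_sum poly_monom)

lemma odd_choose_2_slce_eq_hasse2_support:
  "{n \<in> {2..<CARD('a) - 1}. odd ((n choose 2) * slce (\<alpha> :: 'a::{finite,field}) n)} = hasse2_support \<alpha>"
proof -
  have "n \<in> {2..<CARD('a) - 1} \<and> odd ((n choose 2) * slce \<alpha> n)
      \<longleftrightarrow> n < CARD('a) - 1 \<and> n mod 4 \<in> {2, 3} \<and> slce \<alpha> n = 1" for n
  proof -
    have "n mod 4 \<in> {2, 3} \<Longrightarrow> 2 \<le> n" by auto
    then show ?thesis using slce_0_or_1[of \<alpha> n] odd_choose_2_iff[of n] by (auto simp: even_mult_iff)
  qed
  then show ?thesis unfolding hasse2_support_def by blast
qed

lemma hasse_deriv_2_slce_poly: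
  fixes \<alpha> :: "'a::{finite,field}" and \<beta> :: "'b::field"
  assumes char2: "CHAR('b) = 2"
  shows "\<beta> ^ 2 * poly (hasse_deriv 2 (slce_poly \<alpha>)) \<beta> = (\<Sum>n \<in> hasse2_support \<alpha>. \<beta> ^ n)"
proof -
  define T where "T = CARD('a) - 1"
  let ?p = "slce_poly \<alpha> :: 'b poly"
  have coeff: "coeff ?p n = (if n < T then of_nat (slce \<alpha> n) else 0)" for n
    unfolding T_def by (rule coeff_slce_poly)
  have "degree ?p \<le> T - 1" by (rule degree_le) (auto simp: coeff)
  then have "poly (hasse_deriv 2 ?p) \<beta>
      = (\<Sum>n \<in> {2..<T}. of_nat (n choose 2) * coeff ?p n * \<beta> ^ (n - 2))"
    unfolding hasse_deriv_def poly_sum poly_monom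
    by (intro sum.mono_neutral_left) (auto simp: coeff_eq_0)
  then have "\<beta> ^ 2 * poly (hasse_deriv 2 ?p) \<beta>
      = (\<Sum>n \<in> {2..<T}. of_nat (n choose 2) * coeff ?p n * (\<beta> ^ 2 * \<beta> ^ (n - 2)))"
    by (simp add: sum_distrib_left mult_ac)
  also have "\<dots> = (\<Sum>n \<in> {2..<T}. if odd ((n choose 2) * slce \<alpha> n) then \<beta> ^ n else 0)"
  proof (rule sum.cong[OF refl])
    fix n assume n: "n \<in> {2..<T}"
    have "\<beta> ^ 2 * \<beta> ^ (n - 2) = \<beta> ^ (2 + (n - 2))" by (rule power_add[symmetric])
    also have "2 + (n - 2) = n" using n by simp arith
    finally have "\<beta> ^ 2 * \<beta> ^ (n - 2) = \<beta> ^ n" .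
    moreover have "of_nat (n choose 2) * coeff ?p n = (of_nat ((n choose 2) * slce \<alpha> n) :: 'b)"
      using n coeff by simp
    ultimately show "of_nat (n choose 2) * coeff ?p n * (\<beta> ^ 2 * \<beta> ^ (n - 2))
        = (if odd ((n choose 2) * slce \<alpha> n) then \<beta> ^ n else 0)"
      unfolding of_nat_CHAR_2[OF char2, of "(n choose 2) * slce \<alpha> n"] by simp
  qed
  also have "\<dots> = (\<Sum>n \<in> {n \<in> {2..<T}. odd ((n choose 2) * slce \<alpha> n)}. \<beta> ^ n)"
    by (rule sum.inter_filter[symmetric]) simp
  also have "{n \<in> {2..<T}. odd ((n choose 2) * slce \<alpha> n)} = hasse2_support \<alpha>"
    unfolding T_def by (rule odd_choose_2_slce_eq_hasse2_support)
  finally show ?thesis .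
qed

lemma slce_quarter_filter:
  fixes \<alpha> :: "'a::{finite,field}" and \<zeta> :: complex
  shows "2 * poly (slce_poly \<alpha>) \<zeta> - (1 - \<i>) * poly (slce_poly \<alpha>) (\<i> * \<zeta>)
      - (1 + \<i>) * poly (slce_poly \<alpha>) (- \<i> * \<zeta>) = 4 * (\<Sum>n \<in> hasse2_support \<alpha>. \<zeta> ^ n)"
proof -
  define T where "T = CARD('a) - 1"
  have "2 * poly (slce_poly \<alpha>) \<zeta> - (1 - \<i>) * poly (slce_poly \<alpha>) (\<i> * \<zeta>)
      - (1 + \<i>) * poly (slce_poly \<alpha>) (- \<i> * \<zeta>)
      = (\<Sum>n<T. of_nat (slce \<alpha> n) * \<zeta> ^ n * (2 - (1 - \<i>) * \<i> ^ n - (1 + \<i>) * (- \<i>) ^ n))"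
    unfolding poly_slce_poly T_def[symmetric]
    apply (simp only: power_mult_distrib sum_distrib_left sum_subtractf[symmetric])
    apply (rule sum.cong[OF refl])
    apply (simp add: algebra_simps)
    done
  also have "\<dots> = (\<Sum>n<T. if n mod 4 \<in> {2, 3} \<and> slce \<alpha> n = 1 then 4 * \<zeta> ^ n else 0)"
  proof (rule sum.cong[OF refl])
    fix n
    show "of_nat (slce \<alpha> n) * \<zeta> ^ n * (2 - (1 - \<i>) * \<i> ^ n - (1 + \<i>) * (- \<i>) ^ n)
      = (if n mod 4 \<in> {2, 3} \<and> slce \<alpha> n = 1 then 4 * \<zeta> ^ n else 0)"
      using slce_0_or_1[of \<alpha> n] unfolding quarter_filter_weight by auto
  qed
  also have "\<dots> = (\<Sum>n \<in> hasse2_support \<alpha>. 4 * \<zeta> ^ n)"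
    unfolding hasse2_support_def T_def[symmetric]
    by (subst sum.inter_filter[symmetric]) (auto intro: sum.cong)
  also have "\<dots> = 4 * (\<Sum>n \<in> hasse2_support \<alpha>. \<zeta> ^ n)"
    by (simp add: sum_distrib_left)
  finally show ?thesis .
qed

locale primitive_field_1_mod_4 =
  fixes \<alpha> :: "'a::{finite,field}" and T :: nat
  assumes primitive: "primitive_elem \<alpha>" and T_def: "T = CARD('a) - 1"
    and card_mod_4: "CARD('a) mod 4 = 1"
begin

lemma four_dvd_T: "4 dvd T"
  using card_mod_4 T_def by presburger

lemma even_T: "even T"
  using four_dvd_T by (metis dvd_trans even_numeral)

lemma even_half_T: "even (T div 2)"
  using four_dvd_T by auto

lemma half_T_add: "T div 2 + T div 2 = T"
  using even_T by auto

lemma T_ge_4: "T \<ge> 4"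
proof -
  have "card {0::'a, 1} \<le> CARD('a)" by (rule card_mono) auto
  then have "CARD('a) \<ge> 2" by simp
  then show ?thesis using T_def card_mod_4 by presburger
qed

lemma card_eq_T_plus_1: "CARD('a) = T + 1"
  using T_def T_ge_4 by simp

lemma alpha_nonzero: "\<alpha> \<noteq> 0"
proof
  assume a0: "\<alpha> = 0"
  have "UNIV \<subseteq> {0::'a, 1}"
  proof
    fix x :: 'a
    show "x \<in> {0, 1}"
    proof (cases "x = 0")
      case False
      then obtain n where "x = \<alpha> ^ n" using primitive unfolding primitive_elem_def by blast
      then show ?thesis using a0 by (cases n) auto
    qed simp
  qed
  then have "CARD('a) \<le> card {0::'a, 1}" by (intro card_mono) auto
  then show False using card_eq_T_plus_1 T_ge_4 by simp
qed

lemma alpha_power_T: "\<alpha> ^ T = 1"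
  using finite_field_power_card_minus_1[OF alpha_nonzero] T_def by simp

lemma alpha_power_mod: "\<alpha> ^ n = \<alpha> ^ (n mod T)"
  using power_eq_power_mod[OF alpha_power_T] .

lemma bij_alpha_power: "bij_betw (\<lambda>n. \<alpha> ^ n) {..<T} (UNIV - {0})"
proof -
  have image: "(\<lambda>n. \<alpha> ^ n) ` {..<T} = UNIV - {0}"
  proof
    show "(\<lambda>n. \<alpha> ^ n) ` {..<T} \<subseteq> UNIV - {0}" using alpha_nonzero by auto
    show "UNIV - {0} \<subseteq> (\<lambda>n. \<alpha> ^ n) ` {..<T}"
    proof
      fix x assume "x \<in> UNIV - {0::'a}"
      then obtain n where "x = \<alpha> ^ n" using primitive unfolding primitive_elem_def by blast
      then have "x = \<alpha> ^ (n mod T)" using alpha_power_mod by simp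
      moreover have "n mod T < T" using T_ge_4 by simp
      ultimately show "x \<in> (\<lambda>n. \<alpha> ^ n) ` {..<T}" by blast
    qed
  qed
  then have "card ((\<lambda>n. \<alpha> ^ n) ` {..<T}) = card {..<T}"
    using T_def by (simp add: card_Diff_singleton)
  then have "inj_on (\<lambda>n. \<alpha> ^ n) {..<T}" by (rule eq_card_imp_inj_on[rotated]) simp
  then show ?thesis using image by (simp add: bij_betw_def)
qed

lemma alpha_power_eq_iff: "\<alpha> ^ n = \<alpha> ^ m \<longleftrightarrow> n mod T = m mod T"
proof
  assume "\<alpha> ^ n = \<alpha> ^ m"
  then have "\<alpha> ^ (n mod T) = \<alpha> ^ (m mod T)" using alpha_power_mod by metis
  moreover have "n mod T \<in> {..<T}" "m mod T \<in> {..<T}" using T_ge_4 by auto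
  ultimately show "n mod T = m mod T"
    using bij_alpha_power unfolding bij_betw_def inj_on_def by blast
next
  assume "n mod T = m mod T"
  then show "\<alpha> ^ n = \<alpha> ^ m" using alpha_power_mod by metis
qed

lemma dlog_alpha_power: "dlog \<alpha> (\<alpha> ^ n) = n mod T"
  unfolding dlog_def
proof (rule Least_equality)
  show "\<alpha> ^ (n mod T) = \<alpha> ^ n" using alpha_power_mod by metis
  fix m assume "\<alpha> ^ m = \<alpha> ^ n"
  then have "m mod T = n mod T" using alpha_power_eq_iff by simp
  then show "n mod T \<le> m" by (metis mod_less_eq_dividend)
qed

lemma alpha_power_dlog: "x \<noteq> 0 \<Longrightarrow> \<alpha> ^ dlog \<alpha> x = x"
proof -
  assume "x \<noteq> 0"
  then obtain n where "x = \<alpha> ^ n" using primitive unfolding primitive_elem_def by blast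
  then show ?thesis using dlog_alpha_power alpha_power_mod by simp
qed

lemma alpha_power_half_T: "\<alpha> ^ (T div 2) = - 1"
proof -
  let ?y = "\<alpha> ^ (T div 2)"
  have "?y * ?y = \<alpha> ^ (T div 2 + T div 2)" by (rule power_add[symmetric])
  then have "?y * ?y = 1" using half_T_add alpha_power_T by simp
  then have "(?y - 1) * (?y + 1) = 0" by (simp add: algebra_simps)
  moreover have "?y \<noteq> 1"
    using alpha_power_eq_iff[of "T div 2" 0] T_ge_4 by simp
  ultimately show ?thesis by (simp add: eq_neg_iff_add_eq_0)
qed

lemma square_iff_even_dlog:
  assumes "x \<noteq> 0"
  shows "(\<exists>y. y ^ 2 = x) \<longleftrightarrow> even (dlog \<alpha> x)"
proof
  assume "\<exists>y. y ^ 2 = x"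
  then obtain y where y: "y ^ 2 = x" by blast
  then have "y \<noteq> 0" using assms by auto
  then obtain j where "y = \<alpha> ^ j" using primitive unfolding primitive_elem_def by blast
  then have "x = \<alpha> ^ (2 * j)" using y by (simp add: power_mult mult.commute)
  then have "dlog \<alpha> x = (2 * j) mod T" using dlog_alpha_power by simp
  then show "even (dlog \<alpha> x)" using even_T by (simp add: dvd_mod)
next
  assume "even (dlog \<alpha> x)"
  then obtain j where "dlog \<alpha> x = 2 * j" by blast
  then have "(\<alpha> ^ j) ^ 2 = x"
    using alpha_power_dlog[OF assms] by (simp add: power_mult[symmetric] mult.commute)
  then show "\<exists>y. y ^ 2 = x" by blast
qed

lemma eta_alpha_power: "eta \<alpha> j (\<alpha> ^ n) = exp (2 * pi * \<i> * complex_of_real j) ^ (n mod T)"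
proof -
  have "2 * pi * \<i> * complex_of_real j * of_nat (n mod T)
      = of_nat (n mod T) * (2 * pi * \<i> * complex_of_real j)"
    by simp
  moreover have "\<alpha> ^ n \<noteq> 0" using alpha_nonzero by simp
  ultimately show ?thesis unfolding eta_def dlog_alpha_power by (simp only: if_False exp_of_nat_mult)
qed

lemma power_mod_T_of_power_4:
  fixes w :: "'b::monoid_mult"
  assumes "w ^ 4 = 1"
  shows "w ^ (n mod T) = w ^ n"
proof -
  obtain m where "T = 4 * m" using four_dvd_T by blast
  then have "w ^ T = (w ^ 4) ^ m" by (simp only: power_mult)
  then have "w ^ T = 1" using assms by simp
  then show ?thesis using power_eq_power_mod[of w T n] by simp
qed

lemma rho_alpha_power: "eta \<alpha> (1/2) (\<alpha> ^ n) = (-1) ^ n"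
  unfolding eta_alpha_power exp_two_pi_i_half by (rule power_mod_T_of_power_4) simp

lemma eta_quarter_alpha_power: "eta \<alpha> (1/4) (\<alpha> ^ n) = \<i> ^ n"
  unfolding eta_alpha_power exp_two_pi_i_quarter
  by (rule power_mod_T_of_power_4) (simp add: numeral_eq_Suc)

lemma eta_three_quarters_alpha_power: "eta \<alpha> (3/4) (\<alpha> ^ n) = (- \<i>) ^ n"
  unfolding eta_alpha_power exp_two_pi_i_three_quarters
  by (rule power_mod_T_of_power_4) (simp add: numeral_eq_Suc)

lemma chi_alpha_power:
  assumes "z ^ T = 1"
  shows "chi \<alpha> z (\<alpha> ^ n) = z ^ n"
  using alpha_nonzero power_eq_power_mod[OF assms, of n]
  unfolding chi_def dlog_alpha_power by simp

lemma rho_alpha_power_plus_1: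
  assumes "n < T"
  shows "eta \<alpha> (1/2) (\<alpha> ^ n + 1) = 1 - 2 * of_nat (slce \<alpha> n) - (if n = T div 2 then 1 else 0)"
proof (cases "n = T div 2")
  case True
  then show ?thesis using alpha_power_half_T by (simp add: eta_def slce_def)
next
  case False
  let ?u = "\<alpha> ^ n + 1"
  have "T div 2 < T" using T_ge_4 by simp
  then have "\<alpha> ^ n \<noteq> \<alpha> ^ (T div 2)"
    using False assms alpha_power_eq_iff[of n "T div 2"] by simp
  then have u: "?u \<noteq> 0" using alpha_power_half_T by (auto simp: add_eq_0_iff2)
  have rho: "eta \<alpha> (1/2) ?u = (-1) ^ dlog \<alpha> ?u"
    using rho_alpha_power[of "dlog \<alpha> ?u"] alpha_power_dlog[OF u] by simp
  show ?thesis
    using rho False u square_iff_even_dlog[OF u]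
    by (cases "even (dlog \<alpha> ?u)") (simp_all add: slce_def)
qed

lemma Ksum_eq_poly_slce_poly:
  fixes \<psi> :: "'a \<Rightarrow> complex"
  assumes psi0: "\<psi> 0 = 0" and psi: "\<And>n. \<psi> (\<alpha> ^ n) = w ^ n"
    and wT: "w ^ T = 1" and w1: "w \<noteq> 1"
  shows "Ksum \<alpha> \<psi> = - 2 * w ^ (T div 2) * poly (slce_poly \<alpha>) w - 1"
proof -
  let ?c = "w ^ (T div 2)"
  let ?S = "poly (slce_poly \<alpha>) w"
  let ?f = "\<lambda>z. eta \<alpha> (1/2) (z + 1) * \<psi> (- z)"
  have S: "?S = (\<Sum>n<T. of_nat (slce \<alpha> n) * w ^ n)"
    unfolding poly_slce_poly T_def ..
  have "Ksum \<alpha> \<psi> = (\<Sum>z \<in> UNIV. ?f z)"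
    unfolding Ksum_def
    by (rule sum.reindex_bij_witness[of _ "\<lambda>z. z + 1" "\<lambda>x. x - 1"]) (auto simp: algebra_simps)
  also have "\<dots> = (\<Sum>z \<in> UNIV - {0}. ?f z)"
    by (rule sum.mono_neutral_right) (auto simp: psi0)
  also have "\<dots> = (\<Sum>n<T. ?f (\<alpha> ^ n))"
    using sum.reindex_bij_betw[OF bij_alpha_power, of ?f] by simp
  also have "\<dots> = (\<Sum>n<T. ?c * (w ^ n - 2 * (of_nat (slce \<alpha> n) * w ^ n)
      - (if n = T div 2 then w ^ n else 0)))"
  proof (rule sum.cong[OF refl])
    fix n assume "n \<in> {..<T}"
    then have rho: "eta \<alpha> (1/2) (\<alpha> ^ n + 1)
        = 1 - 2 * of_nat (slce \<alpha> n) - (if n = T div 2 then 1 else 0)"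
      by (simp add: rho_alpha_power_plus_1)
    have "- (\<alpha> ^ n) = \<alpha> ^ (T div 2 + n)" by (simp add: power_add alpha_power_half_T)
    then have "\<psi> (- (\<alpha> ^ n)) = ?c * w ^ n" using psi[of "T div 2 + n"] by (simp add: power_add)
    then show "?f (\<alpha> ^ n) = ?c * (w ^ n - 2 * (of_nat (slce \<alpha> n) * w ^ n)
        - (if n = T div 2 then w ^ n else 0))"
      unfolding rho by (cases "n = T div 2") (simp_all add: algebra_simps)
  qed
  also have "\<dots> = ?c * ((\<Sum>n<T. w ^ n) - 2 * ?S - ?c)"
    using T_ge_4 by (simp add: S sum_subtractf sum_distrib_left[symmetric] sum.delta)
  also have "(\<Sum>n<T. w ^ n) = 0" using wT w1 by (simp add: sum_gp_strict)
  also have "?c * (0 - 2 * ?S - ?c) = - 2 * ?c * ?S - ?c * ?c" by (simp add: algebra_simps)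
  also have "?c * ?c = 1" using wT half_T_add by (simp flip: power_add)
  finally show ?thesis .
qed

lemma i_power_half_T: "\<i> ^ (T div 2) = (if CARD('a) mod 8 = 1 then 1 else -1)"
proof -
  obtain j where j: "T = 4 * j" using four_dvd_T by blast
  then have "\<i> ^ (T div 2) = (-1) ^ j" by (simp add: power_mult)
  moreover have "CARD('a) mod 8 = 1 \<longleftrightarrow> even j" unfolding card_eq_T_plus_1 j by presburger
  ultimately show ?thesis by (simp add: minus_one_power_iff)
qed

lemma Ksum_twists:
  fixes \<zeta> :: complex
  assumes \<zeta>k: "\<zeta> ^ k = 1" and k: "odd k" "k dvd T" and \<zeta>1: "\<zeta> \<noteq> 1"
  shows "Ksum \<alpha> (chi \<alpha> \<zeta>) = - 2 * poly (slce_poly \<alpha>) \<zeta> - 1"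
    and "Ksum \<alpha> (\<lambda>x. eta \<alpha> (1/4) x * chi \<alpha> \<zeta> x)
      = - 2 * \<i> ^ (T div 2) * poly (slce_poly \<alpha>) (\<i> * \<zeta>) - 1"
    and "Ksum \<alpha> (\<lambda>x. eta \<alpha> (3/4) x * chi \<alpha> \<zeta> x)
      = - 2 * \<i> ^ (T div 2) * poly (slce_poly \<alpha>) (- \<i> * \<zeta>) - 1"
proof -
  obtain m where m: "T = k * m" using k(2) by blast
  then have "even m" using even_T k(1) by (simp add: even_mult_iff)
  then have "T div 2 = k * (m div 2)" using m by auto
  then have \<zeta>_half: "\<zeta> ^ (T div 2) = 1" by (simp add: power_mult \<zeta>k)
  have "\<zeta> ^ T = \<zeta> ^ (T div 2) * \<zeta> ^ (T div 2)"
    unfolding power_add[symmetric] half_T_add ..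
  then have \<zeta>T: "\<zeta> ^ T = 1" using \<zeta>_half by simp
  have i4: "\<i> ^ 4 = 1" "(- \<i>) ^ 4 = 1" by (simp_all add: numeral_eq_Suc)
  have iT: "\<i> ^ T = 1" "(- \<i>) ^ T = 1"
    using power_mod_T_of_power_4[OF i4(1), of T] power_mod_T_of_power_4[OF i4(2), of T] by simp_all
  have chi0: "chi \<alpha> \<zeta> 0 = 0" by (simp add: chi_def)
  note chi_pow = chi_alpha_power[OF \<zeta>T]
  note i_neq = i_times_odd_root_neq_1[OF \<zeta>k k(1)]
  show "Ksum \<alpha> (chi \<alpha> \<zeta>) = - 2 * poly (slce_poly \<alpha>) \<zeta> - 1"
    using Ksum_eq_poly_slce_poly[OF chi0 chi_pow \<zeta>T \<zeta>1] \<zeta>_half by simp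
  have psi1: "eta \<alpha> (1/4) (\<alpha> ^ n) * chi \<alpha> \<zeta> (\<alpha> ^ n) = (\<i> * \<zeta>) ^ n" for n
    by (simp add: eta_quarter_alpha_power chi_pow power_mult_distrib)
  have "(\<i> * \<zeta>) ^ T = 1" "(\<i> * \<zeta>) ^ (T div 2) = \<i> ^ (T div 2)"
    by (simp_all add: power_mult_distrib iT \<zeta>T \<zeta>_half)
  then show "Ksum \<alpha> (\<lambda>x. eta \<alpha> (1/4) x * chi \<alpha> \<zeta> x)
      = - 2 * \<i> ^ (T div 2) * poly (slce_poly \<alpha>) (\<i> * \<zeta>) - 1"
    using Ksum_eq_poly_slce_poly[OF _ psi1 _ i_neq(1)] chi0 by simp
  have psi3: "eta \<alpha> (3/4) (\<alpha> ^ n) * chi \<alpha> \<zeta> (\<alpha> ^ n) = (- \<i> * \<zeta>) ^ n" for n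
    unfolding power_mult_distrib[of "- \<i>" \<zeta> n] by (simp add: eta_three_quarters_alpha_power chi_pow)
  have "(- \<i> * \<zeta>) ^ T = 1" "(- \<i> * \<zeta>) ^ (T div 2) = \<i> ^ (T div 2)"
    unfolding power_mult_distrib using even_half_T by (simp_all add: iT \<zeta>T \<zeta>_half)
  then show "Ksum \<alpha> (\<lambda>x. eta \<alpha> (3/4) x * chi \<alpha> \<zeta> x)
      = - 2 * \<i> ^ (T div 2) * poly (slce_poly \<alpha>) (- \<i> * \<zeta>) - 1"
    using Ksum_eq_poly_slce_poly[OF _ psi3 _ i_neq(2)] chi0 by simp
qed

lemma Ksum_combination:
  fixes \<zeta> :: complex
  assumes "\<zeta> ^ k = 1" "odd k" "k dvd T" "\<zeta> \<noteq> 1"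
  shows "(if CARD('a) mod 8 = 1 then
       2 * Ksum \<alpha> (chi \<alpha> \<zeta>)
         - (1 - \<i>) * Ksum \<alpha> (\<lambda>x. eta \<alpha> (1/4) x * chi \<alpha> \<zeta> x)
         - (1 + \<i>) * Ksum \<alpha> (\<lambda>x. eta \<alpha> (3/4) x * chi \<alpha> \<zeta> x)
     else
       4 + 2 * Ksum \<alpha> (chi \<alpha> \<zeta>)
         + (1 - \<i>) * Ksum \<alpha> (\<lambda>x. eta \<alpha> (1/4) x * chi \<alpha> \<zeta> x)
         + (1 + \<i>) * Ksum \<alpha> (\<lambda>x. eta \<alpha> (3/4) x * chi \<alpha> \<zeta> x))
    = - 8 * (\<Sum>n \<in> hasse2_support \<alpha>. \<zeta> ^ n)" (is "?E = _")
proof -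
  let ?S = "poly (slce_poly \<alpha>)"
  have "?E = - 2 * (2 * ?S \<zeta> - (1 - \<i>) * ?S (\<i> * \<zeta>) - (1 + \<i>) * ?S (- \<i> * \<zeta>))"
    unfolding Ksum_twists[OF assms] i_power_half_T by (simp add: algebra_simps)
  then show ?thesis unfolding slce_quarter_filter by simp
qed

end

lemma mult_order_works:
  fixes \<beta> :: "'b::field"
  assumes "\<beta> ^ T = 1" "T > 0"
  shows "mult_order \<beta> > 0" "\<beta> ^ mult_order \<beta> = 1"
proof -
  have "\<exists>d. d > 0 \<and> \<beta> ^ d = 1" using assms by blast
  from LeastI_ex[OF this] show "mult_order \<beta> > 0" "\<beta> ^ mult_order \<beta> = 1"
    unfolding mult_order_def by auto
qed

lemma mult_order_minimal: "0 < d \<Longrightarrow> d < mult_order \<beta> \<Longrightarrow> \<beta> ^ d \<noteq> 1"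
  unfolding mult_order_def using not_less_Least by blast

lemma mult_order_1: "mult_order (1 :: 'b::field) = 1"
  unfolding mult_order_def by (rule Least_equality) auto

lemma mult_order_dvd:
  fixes \<beta> :: "'b::field"
  assumes "\<beta> ^ T = 1" "T > 0"
  shows "mult_order \<beta> dvd T"
proof -
  have "\<beta> ^ (T mod mult_order \<beta>) = 1"
    using power_eq_power_mod[OF mult_order_works(2)[OF assms], of T] assms(1) by simp
  then have "T mod mult_order \<beta> = 0"
    using mult_order_minimal mult_order_works(1)[OF assms] by (meson mod_less_divisor neq0_conv)
  then show ?thesis by auto
qed

text \<open>In characteristic 2, \<open>\<beta>\<^sup>2\<^sup>j = 1\<close> gives \<open>(\<beta>\<^sup>j + 1)\<^sup>2 = 0\<close>.\<close>

lemma odd_mult_order_CHAR_2: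
  fixes \<beta> :: "'b::field"
  assumes char2: "CHAR('b) = 2" and "\<beta> ^ T = 1" "T > 0"
  shows "odd (mult_order \<beta>)"
proof
  assume "even (mult_order \<beta>)"
  then obtain j where j: "mult_order \<beta> = 2 * j" by blast
  then have j0: "0 < j" "j < mult_order \<beta>" using mult_order_works(1)[OF assms(2,3)] by auto
  let ?y = "\<beta> ^ j"
  have yy: "?y * ?y = 1" using mult_order_works(2)[OF assms(2,3)] j by (simp add: power_add[symmetric] mult_2)
  have two: "(2 :: 'b) = 0" using of_nat_CHAR_2[OF char2, of 2] by simp
  have "(?y + 1) * (?y + 1) = ?y * ?y + 2 * ?y + 1" by (simp add: algebra_simps)
  also have "\<dots> = 2 * (?y + 1)" using yy by (simp add: algebra_simps)
  also have "\<dots> = 0" using two by simp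
  finally have "?y = - 1" by (simp add: eq_neg_iff_add_eq_0)
  also have "- 1 = (1 :: 'b)"
  proof -
    have "(1 :: 'b) + 1 = 0" using two by simp
    then have "(1 :: 'b) = - 1" by (simp only: eq_neg_iff_add_eq_0)
    then show ?thesis by (rule sym)
  qed
  finally show False using mult_order_minimal[OF j0] by simp
qed

lemma primeideal_Zzeta_facts:
  assumes "primeideal P (Zzeta_ring k)"
  shows "P \<subseteq> Zzeta k" "0 \<in> P" "\<And>x y. x \<in> P \<Longrightarrow> y \<in> P \<Longrightarrow> x + y \<in> P"
    "\<And>x y. x \<in> P \<Longrightarrow> y \<in> Zzeta k \<Longrightarrow> x * y \<in> P"
    "\<And>x y. x \<in> Zzeta k \<Longrightarrow> y \<in> Zzeta k \<Longrightarrow> x * y \<in> P \<Longrightarrow> x \<in> P \<or> y \<in> P"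
    "\<And>x. x \<in> P \<Longrightarrow> - x \<in> P"
proof -
  interpret primeideal P "Zzeta_ring k" by (rule assms)
  have as: "additive_subgroup P (Zzeta_ring k)" by (rule ideal.axioms(1)[OF is_ideal])
  show "P \<subseteq> Zzeta k" using Icarr by (auto simp: Zzeta_ring_def)
  show "0 \<in> P" using additive_subgroup.zero_closed[OF as] by (simp add: Zzeta_ring_def)
  show "\<And>x y. x \<in> P \<Longrightarrow> y \<in> P \<Longrightarrow> x + y \<in> P"
    using additive_subgroup.a_closed[OF as] by (simp add: Zzeta_ring_def)
  show "\<And>x y. x \<in> P \<Longrightarrow> y \<in> Zzeta k \<Longrightarrow> x * y \<in> P"
    using I_r_closed by (simp add: Zzeta_ring_def)
  show "\<And>x y. x \<in> Zzeta k \<Longrightarrow> y \<in> Zzeta k \<Longrightarrow> x * y \<in> P \<Longrightarrow> x \<in> P \<or> y \<in> P"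
    using I_prime by (simp add: Zzeta_ring_def)
  have "- 1 \<in> Zzeta k"
    unfolding Zzeta_eq_int_poly_range using of_int_in_int_poly_range[of "- 1"] by simp
  then show "\<And>x. x \<in> P \<Longrightarrow> - x \<in> P"
    using I_r_closed[of _ "- 1"] by (simp add: Zzeta_ring_def)
qed

lemma ideal_ext_scale:
  assumes "c \<noteq> 0"
  shows "c * y \<in> ideal_ext R ((\<lambda>x. c * x) ` I) \<longleftrightarrow> y \<in> ideal_ext R I"
proof
  assume "c * y \<in> ideal_ext R ((\<lambda>x. c * x) ` I)"
  then obtain n :: nat and a r where ar: "\<forall>i<n. a i \<in> (\<lambda>x. c * x) ` I \<and> r i \<in> R"
    and s: "c * y = (\<Sum>i<n. a i * r i)" unfolding ideal_ext_def by blast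
  define b where "b i = a i / c" for i
  have b: "\<forall>i<n. b i \<in> I \<and> a i = c * b i" using ar assms unfolding b_def by auto
  have "c * y = (\<Sum>i<n. c * (b i * r i))" unfolding s using b by (intro sum.cong) auto
  also have "\<dots> = c * (\<Sum>i<n. b i * r i)" by (simp add: sum_distrib_left)
  finally have "y = (\<Sum>i<n. b i * r i)" using assms by simp
  then show "y \<in> ideal_ext R I" unfolding ideal_ext_def using ar b by blast
next
  assume "y \<in> ideal_ext R I"
  then obtain n :: nat and a r where ar: "\<forall>i<n. a i \<in> I \<and> r i \<in> R" and s: "y = (\<Sum>i<n. a i * r i)"
    unfolding ideal_ext_def by blast
  then have "c * y = (\<Sum>i<n. (c * a i) * r i)" by (simp add: sum_distrib_left mult.assoc)
  moreover have "\<forall>i<n. c * a i \<in> (\<lambda>x. c * x) ` I \<and> r i \<in> R" using ar by blast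
  ultimately show "c * y \<in> ideal_ext R ((\<lambda>x. c * x) ` I)"
    unfolding ideal_ext_def by (intro CollectI exI[of _ n] exI[of _ "\<lambda>i. c * a i"] exI[of _ r]) simp
qed

lemma ideal_ext_Zzeta_4k_decomp:
  assumes "primeideal P (Zzeta_ring k)" "odd k" "z \<in> ideal_ext (Zzeta (4 * k)) P"
  shows "\<exists>x \<in> P. \<exists>y \<in> P. z = x + \<i> * y"
proof -
  note P = primeideal_Zzeta_facts[OF assms(1)]
  obtain n :: nat and a r where ar: "\<forall>i<n. a i \<in> P \<and> r i \<in> Zzeta (4 * k)"
    and z: "z = (\<Sum>i<n. a i * r i)"
    using assms(3) unfolding ideal_ext_def by blast
  have "m \<le> n \<Longrightarrow> \<exists>x \<in> P. \<exists>y \<in> P. (\<Sum>i<m. a i * r i) = x + \<i> * y" for m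
  proof (induction m)
    case 0
    then show ?case using P(2) by force
  next
    case (Suc m)
    then obtain x y where xy: "x \<in> P" "y \<in> P" "(\<Sum>i<m. a i * r i) = x + \<i> * y" by auto
    have m: "a m \<in> P" "r m \<in> Zzeta (4 * k)" using ar Suc.prems by auto
    then obtain u v where uv: "u \<in> Zzeta k" "v \<in> Zzeta k" "r m = u + \<i> * v"
      using Zzeta_4k_decomp[OF assms(2)] by blast
    have "(\<Sum>i<Suc m. a i * r i) = (x + a m * u) + \<i> * (y + a m * v)"
      using xy(3) uv(3) by (simp add: algebra_simps)
    moreover have "x + a m * u \<in> P" "y + a m * v \<in> P"
      using P(3)[OF xy(1) P(4)[OF m(1) uv(1)]] P(3)[OF xy(2) P(4)[OF m(1) uv(2)]] .
    ultimately show ?case by blast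
  qed
  then show ?thesis using z by blast
qed

lemma ideal_ext_Zzeta_4k_contract:
  assumes "primeideal P (Zzeta_ring k)" "odd k" "A \<in> Zzeta k"
  shows "A \<in> ideal_ext (Zzeta (4 * k)) P \<longleftrightarrow> A \<in> P"
proof
  note P = primeideal_Zzeta_facts[OF assms(1)]
  assume "A \<in> ideal_ext (Zzeta (4 * k)) P"
  then obtain x y where xy: "x \<in> P" "y \<in> P" "A = x + \<i> * y"
    using ideal_ext_Zzeta_4k_decomp[OF assms(1,2)] by blast
  have "x \<in> Zzeta k" "y \<in> Zzeta k" using xy(1,2) P(1) by auto
  then have w: "A - x \<in> Zzeta k" "- y \<in> Zzeta k"
    using assms(3) unfolding Zzeta_eq_int_poly_range
    by (simp_all add: int_poly_range_diff int_poly_range_uminus)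
  have "(A - x) * (A - x) = y * (- y)" using xy(3) by (simp add: algebra_simps)
  then have "(A - x) * (A - x) \<in> P" using P(4)[OF xy(2) w(2)] by simp
  then have "A - x \<in> P" using P(5)[OF w(1) w(1)] by blast
  then show "A \<in> P" using P(3)[OF xy(1)] by force
next
  assume "A \<in> P"
  have "1 \<in> Zzeta (4 * k)"
    unfolding Zzeta_eq_int_poly_range using of_int_in_int_poly_range[of 1] by simp
  then show "A \<in> ideal_ext (Zzeta (4 * k)) P"
    unfolding ideal_ext_def using \<open>A \<in> P\<close>
    by (intro CollectI exI[of _ "1 :: nat"] exI[of _ "\<lambda>_. A"] exI[of _ "\<lambda>_. 1 :: complex"]) simp
qed

lemma neg_8_mem_ideal_ext_Zzeta_4k_iff:
  assumes "primeideal P (Zzeta_ring k)" "odd k" "A \<in> Zzeta k"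
  shows "- 8 * A \<in> ideal_ext (Zzeta (4 * k)) ((\<lambda>x. 8 * x) ` P) \<longleftrightarrow> A \<in> P"
proof -
  note P = primeideal_Zzeta_facts[OF assms(1)]
  have "- A \<in> Zzeta k"
    using assms(3) unfolding Zzeta_eq_int_poly_range by (rule int_poly_range_uminus)
  have "- 8 * A \<in> ideal_ext (Zzeta (4 * k)) ((\<lambda>x. 8 * x) ` P)
      \<longleftrightarrow> 8 * (- A) \<in> ideal_ext (Zzeta (4 * k)) ((\<lambda>x. 8 * x) ` P)" by simp
  also have "\<dots> \<longleftrightarrow> - A \<in> ideal_ext (Zzeta (4 * k)) P" by (rule ideal_ext_scale) simp
  also have "\<dots> \<longleftrightarrow> - A \<in> P" by (rule ideal_ext_Zzeta_4k_contract[OF assms(1,2) \<open>- A \<in> Zzeta k\<close>])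
  also have "\<dots> \<longleftrightarrow> A \<in> P" using P(6)[of A] P(6)[of "- A"] by auto
  finally show ?thesis .
qed

locale F2_adj_iso =
  fixes \<beta> :: "'b::field" and k :: nat and P :: "complex set"
    and \<phi> :: "'b \<Rightarrow> complex set" and \<zeta> :: complex
  assumes prime: "primeideal P (Zzeta_ring k)" and two_mem: "2 \<in> P" and char2: "CHAR('b) = 2"
    and iso: "\<phi> \<in> ring_iso (F2_adj_ring \<beta>) (Zzeta_ring k Quot P)"
    and phi_beta: "\<phi> \<beta> = P +>\<^bsub>Zzeta_ring k\<^esub> \<zeta>" and zeta_mem: "\<zeta> \<in> Zzeta k"
begin

sublocale primeideal P "Zzeta_ring k" by (rule prime)

abbreviation coset :: "complex \<Rightarrow> complex set" where
  "coset x \<equiv> P +>\<^bsub>Zzeta_ring k\<^esub> x"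

lemma beta_power_mem: "\<beta> ^ n \<in> F2_adj \<beta>"
  unfolding F2_adj_eq_int_poly_range by (rule power_in_int_poly_range)

lemma zeta_power_mem: "\<zeta> ^ n \<in> Zzeta k"
  using zeta_mem unfolding Zzeta_eq_int_poly_range by (rule int_poly_range_power)

lemma sum_beta_powers_mem: "(\<Sum>n \<in> N. \<beta> ^ n) \<in> F2_adj \<beta>"
  unfolding F2_adj_eq_int_poly_range by (intro int_poly_range_sum power_in_int_poly_range)

lemma sum_zeta_powers_mem: "(\<Sum>n \<in> N. \<zeta> ^ n) \<in> Zzeta k"
  using zeta_power_mem unfolding Zzeta_eq_int_poly_range by (rule int_poly_range_sum)

lemma phi_hom: "\<phi> \<in> ring_hom (F2_adj_ring \<beta>) (Zzeta_ring k Quot P)"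
  using iso by (simp add: ring_iso_def)

lemma inj_on_phi: "inj_on \<phi> (F2_adj \<beta>)"
  using iso by (simp add: ring_iso_def bij_betw_def F2_adj_ring_def)

lemma phi_add:
  "x \<in> F2_adj \<beta> \<Longrightarrow> y \<in> F2_adj \<beta> \<Longrightarrow> \<phi> (x + y) = \<phi> x \<oplus>\<^bsub>Zzeta_ring k Quot P\<^esub> \<phi> y"
  using ring_hom_add[OF phi_hom, of x y] by (simp add: F2_adj_ring_def)

lemma phi_mult:
  "x \<in> F2_adj \<beta> \<Longrightarrow> y \<in> F2_adj \<beta> \<Longrightarrow> \<phi> (x * y) = \<phi> x \<otimes>\<^bsub>Zzeta_ring k Quot P\<^esub> \<phi> y"
  using ring_hom_mult[OF phi_hom, of x y] by (simp add: F2_adj_ring_def)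

lemma coset_add:
  "x \<in> Zzeta k \<Longrightarrow> y \<in> Zzeta k \<Longrightarrow> coset (x + y) = coset x \<oplus>\<^bsub>Zzeta_ring k Quot P\<^esub> coset y"
  using ring_hom_add[OF rcos_ring_hom, of x y] by (simp add: Zzeta_ring_def)

lemma coset_mult:
  "x \<in> Zzeta k \<Longrightarrow> y \<in> Zzeta k \<Longrightarrow> coset (x * y) = coset x \<otimes>\<^bsub>Zzeta_ring k Quot P\<^esub> coset y"
  using ring_hom_mult[OF rcos_ring_hom, of x y] by (simp add: Zzeta_ring_def)

lemma phi_one: "\<phi> 1 = coset 1"
  using ring_hom_one[OF phi_hom] ring_hom_one[OF rcos_ring_hom]
  by (simp add: F2_adj_ring_def Zzeta_ring_def)

lemma phi_power: "\<phi> (\<beta> ^ n) = coset (\<zeta> ^ n)"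
proof (induction n)
  case 0
  then show ?case using phi_one by simp
next
  case (Suc n)
  have "\<phi> (\<beta> ^ Suc n) = \<phi> \<beta> \<otimes>\<^bsub>Zzeta_ring k Quot P\<^esub> \<phi> (\<beta> ^ n)"
    using phi_mult[OF beta_power_mem[of 1] beta_power_mem[of n]] by simp
  also have "\<dots> = coset (\<zeta> ^ Suc n)"
    using Suc phi_beta coset_mult[OF zeta_mem zeta_power_mem[of n]] by simp
  finally show ?case .
qed

text \<open>\<open>F2_adj_ring \<beta>\<close> is not known to be a ring, so \<open>\<phi> 0 = P\<close> comes from \<open>0 = 1 + 1\<close> and \<open>2 \<in> P\<close>.\<close>

lemma phi_zero: "\<phi> 0 = P"
proof -
  have "(0 :: 'b) = 1 + 1" using of_nat_CHAR_2[OF char2, of 2] by simp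
  then have "\<phi> 0 = \<phi> 1 \<oplus>\<^bsub>Zzeta_ring k Quot P\<^esub> \<phi> 1"
    using phi_add[OF beta_power_mem[of 0] beta_power_mem[of 0]] by simp
  also have "\<dots> = coset 2"
    using phi_one coset_add[OF zeta_power_mem[of 0] zeta_power_mem[of 0]] by simp
  also have "\<dots> = P" using a_rcos_zero[OF is_ideal two_mem] by (simp add: Zzeta_ring_def)
  finally show ?thesis .
qed

lemma phi_sum_powers: "finite N \<Longrightarrow> \<phi> (\<Sum>n \<in> N. \<beta> ^ n) = coset (\<Sum>n \<in> N. \<zeta> ^ n)"
proof (induction N rule: finite_induct)
  case empty
  have "0 \<in> P" by (rule primeideal_Zzeta_facts(2)[OF prime])
  then show ?case using phi_zero a_rcos_zero[OF is_ideal] by (simp add: Zzeta_ring_def)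
next
  case (insert m N)
  then show ?case
    using phi_add[OF beta_power_mem sum_beta_powers_mem] phi_power
      coset_add[OF zeta_power_mem sum_zeta_powers_mem]
    by simp
qed

lemma sum_powers_eq_0_iff: "finite N \<Longrightarrow> (\<Sum>n \<in> N. \<beta> ^ n) = 0 \<longleftrightarrow> (\<Sum>n \<in> N. \<zeta> ^ n) \<in> P"
proof -
  assume N: "finite N"
  have "0 \<in> F2_adj \<beta>"
    unfolding F2_adj_eq_int_poly_range using of_int_in_int_poly_range[of 0] by simp
  then have "(\<Sum>n \<in> N. \<beta> ^ n) = 0 \<longleftrightarrow> \<phi> (\<Sum>n \<in> N. \<beta> ^ n) = \<phi> 0"
    using inj_on_eq_iff[OF inj_on_phi sum_beta_powers_mem] by simp
  also have "\<dots> \<longleftrightarrow> coset (\<Sum>n \<in> N. \<zeta> ^ n) = P" using phi_sum_powers[OF N] phi_zero by simp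
  also have "\<dots> \<longleftrightarrow> (\<Sum>n \<in> N. \<zeta> ^ n) \<in> P"
    using rcos_const_imp_mem a_rcos_zero[OF is_ideal] sum_zeta_powers_mem
    by (auto simp: Zzeta_ring_def)
  finally show ?thesis .
qed

lemma zeta_neq_1:
  assumes "mult_order \<beta> \<noteq> 1"
  shows "\<zeta> \<noteq> 1"
proof
  assume "\<zeta> = 1"
  then have "\<phi> (\<beta> ^ 1) = \<phi> (\<beta> ^ 0)" using phi_power[of 1] phi_power[of 0] by simp
  then have "\<beta> ^ 1 = \<beta> ^ 0" using inj_on_eq_iff[OF inj_on_phi beta_power_mem beta_power_mem] by blast
  then show False using assms by (simp add: mult_order_1)
qed

lemma hasse_deriv_2_slce_poly_eq_0_iff:
  fixes \<alpha> :: "'a::{finite,field}"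
  assumes "\<beta> \<noteq> 0"
  shows "poly (hasse_deriv 2 (slce_poly \<alpha>)) \<beta> = 0 \<longleftrightarrow> (\<Sum>n \<in> hasse2_support \<alpha>. \<zeta> ^ n) \<in> P"
proof -
  have "poly (hasse_deriv 2 (slce_poly \<alpha>)) \<beta> = 0 \<longleftrightarrow> \<beta> ^ 2 * poly (hasse_deriv 2 (slce_poly \<alpha>)) \<beta> = 0"
    using assms by simp
  also have "\<dots> \<longleftrightarrow> (\<Sum>n \<in> hasse2_support \<alpha>. \<beta> ^ n) = 0"
    by (simp only: hasse_deriv_2_slce_poly[OF char2])
  also have "\<dots> \<longleftrightarrow> (\<Sum>n \<in> hasse2_support \<alpha>. \<zeta> ^ n) \<in> P"
    by (rule sum_powers_eq_0_iff) (simp add: hasse2_support_def)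
  finally show ?thesis .
qed

end

theorem mainTheorem4:
  fixes \<alpha> :: "'a::{finite,field}" and \<beta> :: "'b::field"
    and p m k :: nat and P :: "complex set" and \<phi> :: "'b \<Rightarrow> complex set" and \<zeta> :: complex
  assumes p_prime: "prime p" and p_odd: "odd p" and m_pos: "m \<ge> 1"
    and card: "card (UNIV :: 'a set) = p ^ m"
    and prim: "primitive_elem \<alpha>"
    and char2: "CHAR('b) = 2"
    and beta_T: "\<beta> ^ (card (UNIV :: 'a set) - 1) = 1"
    and k_def: "k = mult_order \<beta>" and k_gt: "k > 1"
    and P_prime: "primeideal P (Zzeta_ring k)" and two_P: "2 \<in> P"
    and phi_iso: "\<phi> \<in> ring_iso (F2_adj_ring \<beta>) (Zzeta_ring k Quot P)"
    and zeta_root: "\<zeta> ^ k = 1"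
    and phi_beta: "\<phi> \<beta> = P +>\<^bsub>Zzeta_ring k\<^esub> \<zeta>"
    and q1mod4: "card (UNIV :: 'a set) mod 4 = 1"
  shows "poly (hasse_deriv 2 (slce_poly \<alpha> :: 'b poly)) \<beta> = 0 \<longleftrightarrow>
    (if card (UNIV :: 'a set) mod 8 = 1 then
       2 * Ksum \<alpha> (chi \<alpha> \<zeta>)
         - (1 - \<i>) * Ksum \<alpha> (\<lambda>x. eta \<alpha> (1/4) x * chi \<alpha> \<zeta> x)
         - (1 + \<i>) * Ksum \<alpha> (\<lambda>x. eta \<alpha> (3/4) x * chi \<alpha> \<zeta> x)
       \<in> ideal_ext (Zzeta (4 * k)) ((\<lambda>x. 8 * x) ` P)
     else
       4 + 2 * Ksum \<alpha> (chi \<alpha> \<zeta>)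
         + (1 - \<i>) * Ksum \<alpha> (\<lambda>x. eta \<alpha> (1/4) x * chi \<alpha> \<zeta> x)
         + (1 + \<i>) * Ksum \<alpha> (\<lambda>x. eta \<alpha> (3/4) x * chi \<alpha> \<zeta> x)
       \<in> ideal_ext (Zzeta (4 * k)) ((\<lambda>x. 8 * x) ` P))"
proof -
  define T where "T = CARD('a) - 1"
  interpret primitive_field_1_mod_4 \<alpha> T
    using prim T_def q1mod4 by (rule primitive_field_1_mod_4.intro)
  have \<beta>T: "\<beta> ^ T = 1" and T0: "T > 0" using beta_T T_ge_4 unfolding T_def by simp_all
  have "\<zeta> \<in> Zzeta k" using root_of_unity_in_Zzeta zeta_root k_gt by simp
  with P_prime two_P char2 phi_iso phi_beta interpret F2_adj_iso \<beta> k P \<phi> \<zeta>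
    by (rule F2_adj_iso.intro)
  have k: "odd k" "k dvd T"
    unfolding k_def using odd_mult_order_CHAR_2[OF char2 \<beta>T T0] mult_order_dvd[OF \<beta>T T0] by simp_all
  have "\<zeta> \<noteq> 1" using zeta_neq_1 k_def k_gt by simp
  have "\<beta> \<noteq> 0" using \<beta>T T0 by (auto simp: power_0_left)
  then have "poly (hasse_deriv 2 (slce_poly \<alpha> :: 'b poly)) \<beta> = 0
      \<longleftrightarrow> - 8 * (\<Sum>n \<in> hasse2_support \<alpha>. \<zeta> ^ n) \<in> ideal_ext (Zzeta (4 * k)) ((\<lambda>x. 8 * x) ` P)"
    using neg_8_mem_ideal_ext_Zzeta_4k_iff[OF P_prime k(1) sum_zeta_powers_mem]
    by (simp add: hasse_deriv_2_slce_poly_eq_0_iff)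
  then show ?thesis
    using Ksum_combination[OF zeta_root k \<open>\<zeta> \<noteq> 1\<close>] by (cases "CARD('a) mod 8 = 1") simp_all
qed

end
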